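(* Let $2\le j<k$ be integers and consider the election $E(j,k)$ and the committee $W=D_{k-2}\cup\{x,a\}$. Then (1) $\Delta(W,a,b)=\delta(j,k)$, where $\delta(j,k)=\frac{j!}{\prod_{j'=0}^{j}(k-j')}$; and (2) every voter $v$ of $E(j,k)$ satisfies $|A_v\cap W|\ge k-(j+1)$.
   Context: An approval election is a tuple $(N,C,(A_v)_{v\in N},k)$ with voters $N$, candidates $C$, ballots $A_v\subseteq C$ and target committee size $k$. The PAV score of $W\subseteq C$ is $\textsc{pavsc}(W)=\sum_{v\in N}\sum_{i=1}^{|A_v\cap W|}\frac1i$, and $\Delta(W,a,b)=\textsc{pavsc}((W\setminus\{a\})\cup\{b\})-\textsc{pavsc}(W)$. Let $D_\ell=\{d_1,\dots,d_\ell\}$ denote a set of dummy candidates ($D_0=\varnothing$, $D_\ell\subseteq D_{\ell+1}$). Elections $F(j,k)$, for $1\le j<k$, with candidate set $D_{k-1}\cup\{a,b\}$ and committee size $k$, are defined recursively. $F(1,k)$ has two voters with ballots $D_{k-1}\cup\{a\}$ and $D_{k-2}\cup\{b\}$. For $j>1$, take a copy of $F(j-1,k)$ with candidates $D_{k-1}\cup\{a_1,b_1\}$ and a copy of $F(j-1,k-1)$ with candidates $D_{k-2}\cup\{a_2,b_2\}$, with disjoint voter sets; in every ballot of the first copy replace $a_1$ by $b$ and $b_1$ by $a$, in every ballot of the second copy replace $a_2$ by $a$ and $b_2$ by $b$; $F(j,k)$ has the union of the two voter sets with these ballots, candidates $D_{k-1}\cup\{a,b\}$, and committee size $k$. The election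 $E(j,k)$ (for $2\le j<k$) is defined as follows: take two copies of $F(j-1,k-1)$ with disjoint voter sets $N_1,N_2$ and candidates $D_{k-2}\cup\{a_1,b_1\}$ and $D_{k-2}\cup\{a_2,b_2\}$ respectively; in ballots of voters in $N_1$ replace $a_1$ by $b$ and $b_1$ by $a$ and add a new candidate $x$; in ballots of voters in $N_2$ replace $a_2$ by $a$ and $b_2$ by $b$ and add a new candidate $y$. $E(j,k)$ has voters $N_1\cup N_2$, candidates $D_{k-2}\cup\{x,y,a,b\}$ and committee size $k$. *)

theory Defs
  imports Complex_Main
begin

datatype cand = Dm nat | Ca | Cb | Cx | Cy

definition Dset :: "nat \<Rightarrow> cand set" where
  "Dset l = Dm ` {1..l}"

text \<open>An election: list of ballots (one per voter; voter sets as lists, disjoint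
  union = append), candidate set, committee size.\<close>
record election =
  ballots :: "cand set list"
  cands :: "cand set"
  csize :: nat

definition pavsc :: "election \<Rightarrow> cand set \<Rightarrow> real" where
  "pavsc E W = sum_list (map (\<lambda>A. \<Sum>i=1..card (A \<inter> W). 1 / real i) (ballots E))"

definition Delta :: "election \<Rightarrow> cand set \<Rightarrow> cand \<Rightarrow> cand \<Rightarrow> real" where
  "Delta E W a b = pavsc E ((W - {a}) \<union> {b}) - pavsc E W"

text \<open>Swap a and b (renaming a copy's a_1 to b and b_1 to a).\<close>
fun swap_ab :: "cand \<Rightarrow> cand" where
  "swap_ab Ca = Cb"
| "swap_ab Cb = Ca"
| "swap_ab c = c"

text \<open>Ballot lists of F(j,k) (meaningful for 1 \<le> j < k).\<close>
fun Fb :: "nat \<Rightarrow> nat \<Rightarrow> cand set list" where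
  "Fb 0 k = []"
| "Fb (Suc 0) k = [Dset (k - 1) \<union> {Ca}, Dset (k - 2) \<union> {Cb}]"
| "Fb (Suc (Suc j)) k = map (\<lambda>A. swap_ab ` A) (Fb (Suc j) k) @ Fb (Suc j) (k - 1)"

definition F :: "nat \<Rightarrow> nat \<Rightarrow> election" where
  "F j k = \<lparr> ballots = Fb j k, cands = Dset (k - 1) \<union> {Ca, Cb}, csize = k \<rparr>"

definition E :: "nat \<Rightarrow> nat \<Rightarrow> election" where
  "E j k = \<lparr> ballots =
      map (\<lambda>A. swap_ab ` A \<union> {Cx}) (ballots (F (j - 1) (k - 1)))
    @ map (\<lambda>A. A \<union> {Cy}) (ballots (F (j - 1) (k - 1))),
    cands = Dset (k - 2) \<union> {Cx, Cy, Ca, Cb}, csize = k \<rparr>"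

end

theory Submission
  imports Defs "HOL-Analysis.Harmonic_Numbers"
begin

(*
  Every ballot of F(j,k) is D_m \<union> {c} with c \<in> {a,b} and k - 1 - j \<le> m \<le> k - 1.  Give it the
  weight 1/((m+1)(m+2)), with a minus sign when c = b.  Swapping a and b negates weights, so the
  total weight S(j,k) of F(j,k) obeys S(j+1,k) = S(j,k-1) - S(j,k), a Pascal-type recursion
  solved by S(j,k) = -\<delta>(j+1,k+1).  In E(j,k) each ballot A of F(j-1,k-1) yields two voters, and
  replacing a by b in W changes their joint PAV score by 1/(m+2) - 1/(m+1) or its negative, i.e.
  by minus the weight of A.  Hence \<Delta>(W,a,b) = -S(j-1,k-1) = \<delta>(j,k).  For the second claim,
  every ballot of E(j,k) contains some D_m \<subseteq> D_{k-2} \<subseteq> W with m \<ge> k - j - 1.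
*)

lemma card_Dset [simp]: "card (Dset m) = m"
  unfolding Dset_def by (simp add: card_image inj_on_def)

lemma finite_Dset [simp]: "finite (Dset m)"
  unfolding Dset_def by simp

lemma special_notin_Dset [simp]: "Ca \<notin> Dset m" "Cb \<notin> Dset m" "Cx \<notin> Dset m" "Cy \<notin> Dset m"
  unfolding Dset_def by auto

lemma Dset_mono: "m \<le> n \<Longrightarrow> Dset m \<subseteq> Dset n"
  unfolding Dset_def by auto

lemma swap_ab_image_Dset [simp]: "swap_ab ` Dset m = Dset m"
  unfolding Dset_def by force

lemma card_Dset_Un_inter_Dset_Un:
  assumes "m \<le> n" "finite S" "S \<inter> range Dm = {}" "T \<inter> range Dm = {}"
  shows "card ((Dset m \<union> S) \<inter> (Dset n \<union> T)) = m + card (S \<inter> T)"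
proof -
  have "(Dset m \<union> S) \<inter> (Dset n \<union> T) = Dset m \<union> (S \<inter> T)"
    using assms Dset_mono[of m n] unfolding Dset_def by auto
  moreover have "Dset m \<inter> (S \<inter> T) = {}"
    using assms(3) unfolding Dset_def by auto
  ultimately show ?thesis
    using assms(2) by (simp add: card_Un_disjoint)
qed

lemma Fb_ballot_shape:
  "0 < j \<Longrightarrow> j < k \<Longrightarrow> A \<in> set (Fb j k) \<Longrightarrow>
    \<exists>m c. k - Suc j \<le> m \<and> m < k \<and> c \<in> {Ca, Cb} \<and> A = insert c (Dset m)"
proof (induction j k arbitrary: A rule: Fb.induct)
  case (1 k)
  then show ?case by simp
next
  case (2 k)
  from "2.prems"(3) consider "A = insert Ca (Dset (k - 1))" | "A = insert Cb (Dset (k - 2))"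
    by auto
  then show ?case
  proof cases
    case 1
    then show ?thesis
      using "2.prems"(2) by (intro exI[of _ "k - 1"] exI[of _ Ca]) auto
  next
    case 2
    then show ?thesis
      using "2.prems"(2) by (intro exI[of _ "k - 2"] exI[of _ Cb]) auto
  qed
next
  case (3 j k)
  from "3.prems"(3) consider (swapped) B where "B \<in> set (Fb (Suc j) k)" "A = swap_ab ` B"
    | (shifted) "A \<in> set (Fb (Suc j) (k - 1))"
    by auto
  then show ?case
  proof cases
    case swapped
    have "Suc j < k"
      using "3.prems"(2) by simp
    then obtain m c where "k - Suc (Suc j) \<le> m" "m < k" "c \<in> {Ca, Cb}" "B = insert c (Dset m)"
      using "3.IH"(1)[OF zero_less_Suc _ swapped(1)] by blast
    then show ?thesis
      using swapped(2) by (intro exI[of _ m] exI[of _ "swap_ab c"]) auto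
  next
    case shifted
    have "Suc j < k - 1"
      using "3.prems"(2) by simp
    then obtain m c where "k - 1 - Suc (Suc j) \<le> m" "m < k - 1" "c \<in> {Ca, Cb}" "A = insert c (Dset m)"
      using "3.IH"(2)[OF zero_less_Suc _ shifted] by blast
    then show ?thesis
      by (intro exI[of _ m] exI[of _ c]) auto
  qed
qed

definition delta :: "nat \<Rightarrow> nat \<Rightarrow> real" where
  "delta j k = fact j / (\<Prod>j'=0..j. real (k - j'))"

lemma delta_Suc_diff:
  assumes "Suc j < k"
  shows "delta (Suc j) (Suc k) - delta (Suc j) k = - delta (Suc (Suc j)) (Suc k)"
proof -
  define P where "P = (\<Prod>i=0..j. real (k - i))"
  have "P > 0"
    unfolding P_def using assms by (intro prod_pos) auto
  have shift: "(\<Prod>i=0..Suc n. real (Suc k - i)) = real (Suc k) * (\<Prod>i=0..n. real (k - i))" for n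
    by (subst prod.atLeast0_atMost_Suc_shift) simp
  have "(\<Prod>i=0..Suc j. real (Suc k - i)) = real (Suc k) * P"
    unfolding P_def shift ..
  moreover have "(\<Prod>i=0..Suc j. real (k - i)) = P * (real k - real j - 1)"
    using assms unfolding P_def by simp
  moreover have "(\<Prod>i=0..Suc (Suc j). real (Suc k - i)) = real (Suc k) * (P * (real k - real j - 1))"
    using assms unfolding P_def shift by simp
  ultimately show ?thesis
    unfolding delta_def using \<open>P > 0\<close> assms
    by (simp add: divide_simps) (simp add: algebra_simps)
qed

definition ab_weight :: "cand set \<Rightarrow> real" where
  "ab_weight A = (if Ca \<in> A then 1 else -1)
     / ((real (card (A - {Ca, Cb})) + 1) * (real (card (A - {Ca, Cb})) + 2))"

lemma ab_weight_insert_Dset: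
  "ab_weight (insert c (Dset m)) = (if c = Ca then 1 else -1) / ((real m + 1) * (real m + 2))"
  if "c \<in> {Ca, Cb}"
proof -
  have "insert c (Dset m) - {Ca, Cb} = Dset m"
    using that by auto
  then show ?thesis
    unfolding ab_weight_def using that by auto
qed

lemma ab_weight_swap_ab:
  "c \<in> {Ca, Cb} \<Longrightarrow> ab_weight (swap_ab ` insert c (Dset m)) = - ab_weight (insert c (Dset m))"
  by (auto simp: ab_weight_insert_Dset)

lemma sum_ab_weight_Fb:
  "0 < j \<Longrightarrow> j < k \<Longrightarrow> (\<Sum>A\<leftarrow>Fb j k. ab_weight A) = - delta (Suc j) (Suc k)"
proof (induction j k rule: Fb.induct)
  case (1 k)
  then show ?case by simp
next
  case (2 k)
  define n where "n = k - 2"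
  have k: "k = Suc (Suc n)"
    using "2.prems" unfolding n_def by simp
  have "(\<Sum>A\<leftarrow>Fb (Suc 0) k. ab_weight A) = 1 / ((real n + 2) * (real n + 3)) - 1 / ((real n + 1) * (real n + 2))"
    unfolding k by (simp add: ab_weight_insert_Dset add.commute)
  also have "\<dots> = - 2 / ((real n + 3) * (real n + 2) * (real n + 1))"
    by (simp add: divide_simps)
  also have "\<dots> = - delta (Suc (Suc 0)) (Suc k)"
    unfolding k delta_def by (simp add: prod.atLeast0_atMost_Suc algebra_simps)
  finally show ?case .
next
  case (3 j k)
  have bounds: "0 < Suc j" "Suc j < k"
    using "3.prems"(2) by simp_all
  have "ab_weight (swap_ab ` A) = - ab_weight A" if A: "A \<in> set (Fb (Suc j) k)" for A
  proof -
    obtain m c where c: "c \<in> {Ca, Cb}" and A_eq: "A = insert c (Dset m)"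
      using Fb_ballot_shape[OF bounds A] by blast
    show ?thesis
      unfolding A_eq by (rule ab_weight_swap_ab[OF c])
  qed
  then have "(\<Sum>A\<leftarrow>Fb (Suc j) k. ab_weight (swap_ab ` A)) = (\<Sum>A\<leftarrow>Fb (Suc j) k. - ab_weight A)"
    by (intro arg_cong[where f = sum_list] map_cong) auto
  then have "(\<Sum>A\<leftarrow>Fb (Suc (Suc j)) k. ab_weight A)
      = - (\<Sum>A\<leftarrow>Fb (Suc j) k. ab_weight A) + (\<Sum>A\<leftarrow>Fb (Suc j) (k - 1). ab_weight A)"
    by (simp add: o_def uminus_sum_list_map)
  also have "\<dots> = delta (Suc (Suc j)) (Suc k) - delta (Suc (Suc j)) k"
    using "3.IH" "3.prems"(2) by simp
  also have "\<dots> = - delta (Suc (Suc (Suc j))) (Suc k)"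
    using delta_Suc_diff "3.prems"(2) by simp
  finally show ?case .
qed

lemma Delta_eq_sum_harm_diff:
  "Delta El W a b = (\<Sum>B\<leftarrow>ballots El. harm (card (B \<inter> (W - {a} \<union> {b}))) - harm (card (B \<inter> W)))"
  unfolding Delta_def pavsc_def harm_def by (simp add: inverse_eq_divide sum_list_subtractf)

lemma harm_second_difference:
  "harm (Suc (Suc m)) - 2 * harm (Suc m) + harm m = - 1 / ((real m + 1) * (real m + 2))"
proof -
  have "harm (Suc (Suc m)) - 2 * harm (Suc m) + harm m = 1 / (real m + 2) - 1 / (real m + 1)"
    by (simp add: harm_Suc inverse_eq_divide add.commute)
  then show ?thesis
    by (simp add: field_simps)
qed

lemma E_ballot_pair_harm_diff:
  assumes "m \<le> n" "c \<in> {Ca, Cb}"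
  defines "A \<equiv> insert c (Dset m)"
    and "W \<equiv> Dset n \<union> {Cx, Ca}" and "W' \<equiv> Dset n \<union> {Cx, Cb}"
  shows "harm (card ((swap_ab ` A \<union> {Cx}) \<inter> W')) - harm (card ((swap_ab ` A \<union> {Cx}) \<inter> W))
       + (harm (card ((A \<union> {Cy}) \<inter> W')) - harm (card ((A \<union> {Cy}) \<inter> W)))
       = - ab_weight A"
proof -
  have card_inter: "card ((Dset m \<union> S) \<inter> (Dset n \<union> T)) = m + card (S \<inter> T)"
    if "S \<subseteq> {Ca, Cb, Cx, Cy}" "T \<subseteq> {Ca, Cb, Cx, Cy}" for S T
    using card_Dset_Un_inter_Dset_Un[OF assms(1)] that finite_subset[OF that(1)] by blast
  from assms(2) consider (a) "c = Ca" | (b) "c = Cb"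
    by blast
  then show ?thesis
  proof cases
    case a
    then have "swap_ab ` A \<union> {Cx} = Dset m \<union> {Cb, Cx}" "A \<union> {Cy} = Dset m \<union> {Ca, Cy}"
      unfolding A_def by auto
    moreover have "card ((Dset m \<union> {Cb, Cx}) \<inter> W') = Suc (Suc m)"
      unfolding W'_def using card_inter[of "{Cb, Cx}" "{Cx, Cb}"] by (simp add: insert_commute)
    moreover have "card ((Dset m \<union> {Cb, Cx}) \<inter> W) = Suc m"
      unfolding W_def using card_inter[of "{Cb, Cx}" "{Cx, Ca}"] by simp
    moreover have "card ((Dset m \<union> {Ca, Cy}) \<inter> W') = m"
      unfolding W'_def using card_inter[of "{Ca, Cy}" "{Cx, Cb}"] by simp
    moreover have "card ((Dset m \<union> {Ca, Cy}) \<inter> W) = Suc m"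
      unfolding W_def using card_inter[of "{Ca, Cy}" "{Cx, Ca}"] by simp
    ultimately show ?thesis
      using a harm_second_difference[of m] unfolding A_def
      by (simp add: ab_weight_insert_Dset)
  next
    case b
    then have "swap_ab ` A \<union> {Cx} = Dset m \<union> {Ca, Cx}" "A \<union> {Cy} = Dset m \<union> {Cb, Cy}"
      unfolding A_def by auto
    moreover have "card ((Dset m \<union> {Ca, Cx}) \<inter> W') = Suc m"
      unfolding W'_def using card_inter[of "{Ca, Cx}" "{Cx, Cb}"] by simp
    moreover have "card ((Dset m \<union> {Ca, Cx}) \<inter> W) = Suc (Suc m)"
      unfolding W_def using card_inter[of "{Ca, Cx}" "{Cx, Ca}"] by (simp add: insert_commute)
    moreover have "card ((Dset m \<union> {Cb, Cy}) \<inter> W') = Suc m"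
      unfolding W'_def using card_inter[of "{Cb, Cy}" "{Cx, Cb}"] by simp
    moreover have "card ((Dset m \<union> {Cb, Cy}) \<inter> W) = m"
      unfolding W_def using card_inter[of "{Cb, Cy}" "{Cx, Ca}"] by simp
    ultimately show ?thesis
      using b harm_second_difference[of m] unfolding A_def
      by (simp add: ab_weight_insert_Dset)
  qed
qed

lemma Delta_E_eq_sum_ab_weight:
  assumes "2 \<le> j" "j < k"
  shows "Delta (E j k) (Dset (k - 2) \<union> {Cx, Ca}) Ca Cb = - (\<Sum>A\<leftarrow>Fb (j - 1) (k - 1). ab_weight A)"
proof -
  define L where "L = Fb (j - 1) (k - 1)"
  define gain :: "cand set \<Rightarrow> real" where "gain B = harm (card (B \<inter> (Dset (k - 2) \<union> {Cx, Cb})))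
    - harm (card (B \<inter> (Dset (k - 2) \<union> {Cx, Ca})))" for B
  have W': "Dset (k - 2) \<union> {Cx, Ca} - {Ca} \<union> {Cb} = Dset (k - 2) \<union> {Cx, Cb}"
    by auto
  have "Delta (E j k) (Dset (k - 2) \<union> {Cx, Ca}) Ca Cb = (\<Sum>B\<leftarrow>ballots (E j k). gain B)"
    unfolding Delta_eq_sum_harm_diff W' gain_def ..
  also have "\<dots> = (\<Sum>A\<leftarrow>L. gain (swap_ab ` A \<union> {Cx}) + gain (A \<union> {Cy}))"
    unfolding E_def F_def L_def by (simp add: sum_list_addf o_def)
  also have "\<dots> = (\<Sum>A\<leftarrow>L. - ab_weight A)"
  proof (intro arg_cong[where f = sum_list] map_cong refl)
    fix A
    assume "A \<in> set L"
    moreover have "0 < j - 1" "j - 1 < k - 1"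
      using assms by auto
    ultimately obtain m c where "m < k - 1" "c \<in> {Ca, Cb}" "A = insert c (Dset m)"
      using Fb_ballot_shape unfolding L_def by blast
    then show "gain (swap_ab ` A \<union> {Cx}) + gain (A \<union> {Cy}) = - ab_weight A"
      unfolding gain_def using E_ballot_pair_harm_diff[of m "k - 2" c] by simp
  qed
  also have "\<dots> = - (\<Sum>A\<leftarrow>L. ab_weight A)"
    by (simp add: uminus_sum_list_map o_def)
  finally show ?thesis
    unfolding L_def .
qed

lemma E_ballot_card_inter_lower:
  assumes "2 \<le> j" "j < k" "B \<in> set (ballots (E j k))"
  shows "k - (j + 1) \<le> card (B \<inter> (Dset (k - 2) \<union> {Cx, Ca}))"
proof -
  obtain A where A: "A \<in> set (Fb (j - 1) (k - 1))" "B = swap_ab ` A \<union> {Cx} \<or> B = A \<union> {Cy}"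
    using assms(3) unfolding E_def F_def by auto
  moreover have "0 < j - 1" "j - 1 < k - 1"
    using assms by auto
  ultimately obtain m c where m: "k - 1 - Suc (j - 1) \<le> m" "m < k - 1" "A = insert c (Dset m)"
    using Fb_ballot_shape by blast
  have "Dset m \<subseteq> B"
    using A(2) unfolding m(3) by auto
  moreover have "Dset m \<subseteq> Dset (k - 2) \<union> {Cx, Ca}"
    using Dset_mono[of m "k - 2"] m(2) by fastforce
  ultimately have "card (Dset m) \<le> card (B \<inter> (Dset (k - 2) \<union> {Cx, Ca}))"
    by (intro card_mono) auto
  with m(1) assms(1) show ?thesis
    by simp
qed

theorem lemma5:
  fixes j k :: nat
  assumes "2 \<le> j" and "j < k"
  shows "Delta (E j k) (Dset (k - 2) \<union> {Cx, Ca}) Ca Cb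
           = fact j / (\<Prod>j'=0..j. real (k - j'))
         \<and> (\<forall>A \<in> set (ballots (E j k)). k - (j + 1) \<le> card (A \<inter> (Dset (k - 2) \<union> {Cx, Ca})))"
proof -
  have "Delta (E j k) (Dset (k - 2) \<union> {Cx, Ca}) Ca Cb = - (\<Sum>A\<leftarrow>Fb (j - 1) (k - 1). ab_weight A)"
    using Delta_E_eq_sum_ab_weight[OF assms] .
  also have "\<dots> = delta j k"
    using sum_ab_weight_Fb[of "j - 1" "k - 1"] assms by simp
  finally show ?thesis
    unfolding delta_def using E_ballot_card_inter_lower[OF assms] by blast
qed

end
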